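(* In the setting of the context, $$\|\mathcal D\|_\perp\le\big(\lambda_2^{(2)}\lambda_2^{(1)}\big)^2.$$
   Context: Let $x_0\in\mathbb C^n\setminus\{0\}$ and $A=[A_1,A_2]$ with $A_1,A_2\in\mathbb C^{n\times N/2}$ such that each $A_l^*$ is isometric ($A_lA_l^*=I_n$). For $l=1,2$: $b_l=|A_l^*x_0|$, $B_l=A_l\,\mathrm{diag}\big(\frac{A_l^*x_0}{|A_l^*x_0|}\big)$ (componentwise quotient, convention $y(j)/|y(j)|=1$ if $y(j)=0$), $\mathcal B_l=\begin{bmatrix}\Re B_l\\ \Im B_l\end{bmatrix}\in\mathbb R^{2n\times N/2}$, and $\lambda_2^{(l)}=\max\{\|\Im(B_l^*u)\|:u\in\mathbb C^n,\ \Re((iu)^*x_0)=0,\ \|u\|=1\}$. Let $G(v)=\begin{bmatrix}\Re v\\ \Im v\end{bmatrix}\in\mathbb R^{2n}$, $\xi_1=G(x_0)$, $\mathcal D=\mathcal B_2\mathcal B_2^\top\mathcal B_1\mathcal B_1^\top\in\mathbb R^{2n\times 2n}$, and $\|\mathcal D\|_\perp=\max\{\|\mathcal D\xi\|:\xi\in\mathbb R^{2n},\ \xi^\top\xi_1=0,\ \|\xi\|=1\}$. *)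

theory Defs
  imports "HOL-Analysis.Analysis"
begin

text \<open>The real space R^{2n} is real^('n::finite + 'n::finite): Inl i is the real-part block, Inr i the imaginary-part block.\<close>

definition cadj :: "complex^'m::finite^'n::finite \<Rightarrow> complex^'n::finite^'m::finite" where
  "cadj A = (\<chi> j i. cnj (A $ i $ j))"

definition phase :: "complex^'m::finite \<Rightarrow> complex^'m::finite" where
  "phase y = (\<chi> j. if y $ j = 0 then 1 else y $ j / complex_of_real (cmod (y $ j)))"

definition Bmat :: "complex^'m::finite^'n::finite \<Rightarrow> complex^'n::finite \<Rightarrow> complex^'m::finite^'n::finite" where
  "Bmat A x0 = (\<chi> i j. A $ i $ j * phase (cadj A *v x0) $ j)"

definition realify :: "complex^'m::finite^'n::finite \<Rightarrow> real^'m::finite^('n::finite + 'n::finite)" where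
  "realify B = (\<chi> k j. case k of Inl i \<Rightarrow> Re (B $ i $ j) | Inr i \<Rightarrow> Im (B $ i $ j))"

definition Gvec :: "complex^'n::finite \<Rightarrow> real^('n::finite + 'n::finite)" where
  "Gvec v = (\<chi> k. case k of Inl i \<Rightarrow> Re (v $ i) | Inr i \<Rightarrow> Im (v $ i))"

definition cinner :: "complex^'n::finite \<Rightarrow> complex^'n::finite \<Rightarrow> complex" where
  "cinner u v = (\<Sum>k\<in>UNIV. cnj (u $ k) * v $ k)"

definition lambda2 :: "complex^'m::finite^'n::finite \<Rightarrow> complex^'n::finite \<Rightarrow> real" where
  "lambda2 B x0 = Sup {norm ((\<chi> j. Im ((cadj B *v u) $ j)) :: real^'m::finite) | u.
       Re (cinner (\<i> *s u) x0) = 0 \<and> norm u = 1}"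

definition Dmat :: "complex^'m::finite^'n::finite \<Rightarrow> complex^'m::finite^'n::finite \<Rightarrow> complex^'n::finite \<Rightarrow> real^('n::finite+'n::finite)^('n::finite+'n::finite)" where
  "Dmat A1 A2 x0 = (let B1 = realify (Bmat A1 x0); B2 = realify (Bmat A2 x0)
     in B2 ** transpose B2 ** B1 ** transpose B1)"

definition perp_norm :: "real^('n::finite+'n::finite)^('n::finite+'n::finite) \<Rightarrow> real^('n::finite+'n::finite) \<Rightarrow> real" where
  "perp_norm D \<xi>1 = Sup {norm (D *v \<xi>) | \<xi>. \<xi> \<bullet> \<xi>1 = 0 \<and> norm \<xi> = 1}"

end

theory Submission imports Defs begin

text \<open>Identify \<open>\<complex>\<^sup>n\<close> with \<open>\<real>\<^sup>2\<^sup>n\<close> via \<open>G\<close>, so that \<open>G u \<bullet> G v = Re \<langle>u, v\<rangle>\<close>. Then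
  \<open>\<B>\<^sub>l\<^sup>T (G u) = Re (B\<^sub>l\<^sup>* u)\<close> and \<open>\<B>\<^sub>l\<^sup>T (G u) = Im (B\<^sub>l\<^sup>* (\<i> u))\<close>, so on the orthogonal complement of
  \<open>\<xi>\<^sub>1 = G x\<^sub>0\<close> the map \<open>\<B>\<^sub>l\<^sup>T\<close> has norm at most \<open>\<lambda>\<^sub>2\<^sup>(\<^sup>l\<^sup>)\<close>. Moreover \<open>B\<^sub>l\<^sup>* x\<^sub>0 = |A\<^sub>l\<^sup>* x\<^sub>0|\<close> is
  real, and \<open>B\<^sub>l\<close> is again a coisometry, so \<open>\<B>\<^sub>l\<^sup>T \<xi>\<^sub>1 \<bullet> \<B>\<^sub>l\<^sup>T \<xi> = Re \<langle>x\<^sub>0, u\<rangle> = \<xi>\<^sub>1 \<bullet> \<xi>\<close>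
  for \<open>\<xi> = G u\<close>. Hence \<open>\<B>\<^sub>l \<B>\<^sub>l\<^sup>T\<close> maps \<open>\<xi>\<^sub>1\<^sup>\<bottom>\<close> into itself with norm at most \<open>(\<lambda>\<^sub>2\<^sup>(\<^sup>l\<^sup>))\<^sup>2\<close>,
  and composing the two factors of \<open>\<D>\<close> gives the bound.\<close>

lemma inner_matrix_vector_transpose:
  fixes M :: "real^'m^'k"
  shows "(M *v x) \<bullet> y = x \<bullet> (transpose M *v y)"
  using dot_lmul_matrix[of y M x] by (simp add: inner_commute)

lemma linear_norm_le_on_orth:
  fixes f :: "'a::real_inner \<Rightarrow> 'b::real_normed_vector"
  assumes "linear f"
    and unit_bound: "\<And>\<xi>. \<xi> \<bullet> e = 0 \<Longrightarrow> norm \<xi> = 1 \<Longrightarrow> norm (f \<xi>) \<le> l"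
    and "\<xi> \<bullet> e = 0"
  shows "norm (f \<xi>) \<le> l * norm \<xi>"
proof (cases "\<xi> = 0")
  case True
  then show ?thesis using \<open>linear f\<close> by (simp add: linear_0)
next
  case False
  then have pos: "norm \<xi> > 0" by simp
  have "norm (f (inverse (norm \<xi>) *\<^sub>R \<xi>)) \<le> l"
    using pos \<open>\<xi> \<bullet> e = 0\<close> by (intro unit_bound) simp_all
  then have "inverse (norm \<xi>) * norm (f \<xi>) \<le> l"
    using pos by (simp add: linear_cmul[OF \<open>linear f\<close>])
  then show ?thesis using pos by (simp add: field_simps)
qed

lemma mult_transpose_orth:
  fixes M :: "real^'m^'k"
  assumes orth: "\<And>\<xi>. \<xi> \<bullet> e = 0 \<Longrightarrow> (transpose M *v e) \<bullet> (transpose M *v \<xi>) = 0"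
    and "\<xi> \<bullet> e = 0"
  shows "(M *v (transpose M *v \<xi>)) \<bullet> e = 0"
  using inner_matrix_vector_transpose[of M "transpose M *v \<xi>" e] orth[OF \<open>\<xi> \<bullet> e = 0\<close>]
  by (metis inner_commute)

text \<open>With \<open>P = M M\<^sup>T \<xi>\<close> we have \<open>\<parallel>P\<parallel>\<^sup>2 = M\<^sup>T \<xi> \<bullet> M\<^sup>T P\<close>, and \<open>P\<close> is again orthogonal to \<open>e\<close>,
  so the bound on \<open>M\<^sup>T\<close> applies to both factors.\<close>

lemma norm_mult_transpose_le:
  fixes M :: "real^'m^'k"
  assumes bound: "\<And>\<xi>. \<xi> \<bullet> e = 0 \<Longrightarrow> norm \<xi> = 1 \<Longrightarrow> norm (transpose M *v \<xi>) \<le> l"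
    and orth: "\<And>\<xi>. \<xi> \<bullet> e = 0 \<Longrightarrow> (transpose M *v e) \<bullet> (transpose M *v \<xi>) = 0"
    and "l \<ge> 0" and "\<xi> \<bullet> e = 0"
  shows "norm (M *v (transpose M *v \<xi>)) \<le> l\<^sup>2 * norm \<xi>"
proof -
  define P where "P = M *v (transpose M *v \<xi>)"
  have T_le: "norm (transpose M *v \<eta>) \<le> l * norm \<eta>" if "\<eta> \<bullet> e = 0" for \<eta>
    using matrix_vector_mul_linear bound that by (rule linear_norm_le_on_orth)
  have "P \<bullet> e = 0"
    unfolding P_def using orth \<open>\<xi> \<bullet> e = 0\<close> by (rule mult_transpose_orth)
  have "norm P * norm P = P \<bullet> P"
    by (metis power2_eq_square power2_norm_eq_inner)
  also have "\<dots> = (transpose M *v \<xi>) \<bullet> (transpose M *v P)"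
    unfolding P_def by (rule inner_matrix_vector_transpose)
  also have "\<dots> \<le> norm (transpose M *v \<xi>) * norm (transpose M *v P)"
    by (rule norm_cauchy_schwarz)
  also have "\<dots> \<le> (l * norm \<xi>) * (l * norm P)"
    using T_le[OF \<open>\<xi> \<bullet> e = 0\<close>] T_le[OF \<open>P \<bullet> e = 0\<close>] \<open>l \<ge> 0\<close>
    by (intro mult_mono) auto
  finally have "norm P * norm P \<le> (l\<^sup>2 * norm \<xi>) * norm P"
    by (simp add: power2_eq_square mult_ac)
  then show ?thesis
    unfolding P_def[symmetric] by (cases "norm P = 0") (auto simp: \<open>l \<ge> 0\<close>)
qed

lemma perp_norm_le:
  assumes "\<exists>\<xi>. \<xi> \<bullet> \<xi>1 = 0 \<and> norm \<xi> = 1"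
    and "\<And>\<xi>. \<xi> \<bullet> \<xi>1 = 0 \<Longrightarrow> norm \<xi> = 1 \<Longrightarrow> norm (D *v \<xi>) \<le> c"
  shows "perp_norm D \<xi>1 \<le> c"
  unfolding perp_norm_def using assms by (intro cSup_least) auto

lemma norm_vector_smult: "norm (c *s x) = norm c * norm (x :: 'a::real_normed_div_algebra^'n)"
  unfolding norm_vec_def by (simp add: norm_mult L2_set_right_distrib)

lemma cinner_matrix_vector_cadj: "cinner u (A *v v) = cinner (cadj A *v u) v"
  unfolding cinner_def matrix_vector_mult_def cadj_def
  by (simp add: sum_distrib_left sum_distrib_right mult_ac) (rule sum.swap)

lemma Re_cinner_self: "Re (cinner u u) = (norm u)\<^sup>2"
proof -
  have "Re (cnj z * z) = (cmod z)\<^sup>2" for z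
    by (simp add: mult.commute complex_mult_cnj cmod_power2)
  then show ?thesis
    unfolding cinner_def norm_vec_def L2_set_def Re_sum by (simp add: sum_nonneg)
qed

lemma sum_UNIV_Plus:
  "(\<Sum>k\<in>(UNIV::('a::finite + 'b::finite) set). f k) = (\<Sum>i\<in>UNIV. f (Inl i)) + (\<Sum>i\<in>UNIV. f (Inr i))"
  by (subst UNIV_Plus_UNIV[symmetric], subst sum.Plus) auto

lemma inner_Gvec: "Gvec u \<bullet> Gvec v = Re (cinner u v)"
  unfolding inner_vec_def Gvec_def cinner_def
  by (simp add: sum_UNIV_Plus sum.distrib)

lemma norm_Gvec: "norm (Gvec u) = norm u"
  by (simp add: norm_eq_sqrt_inner inner_Gvec Re_cinner_self)

lemma Gvec_surj: "\<exists>u. \<xi> = Gvec u"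
proof
  show "\<xi> = Gvec (\<chi> i. Complex (\<xi> $ Inl i) (\<xi> $ Inr i))"
    unfolding Gvec_def vec_eq_iff by (auto split: sum.splits)
qed

lemma transpose_realify_mult_Gvec:
  "transpose (realify B) *v Gvec u = (\<chi> j. Re ((cadj B *v u) $ j))"
  unfolding transpose_def realify_def Gvec_def matrix_vector_mult_def cadj_def vec_eq_iff
  by (simp add: sum_UNIV_Plus sum.distrib)

lemma orth_Gvec_unit_exists:
  assumes "x0 \<noteq> 0"
  shows "\<exists>\<xi>. \<xi> \<bullet> Gvec x0 = 0 \<and> norm \<xi> = 1"
proof -
  define w where "w = Gvec (\<i> *s x0)"
  have "Im (cinner x0 x0) = 0"
    unfolding cinner_def Im_sum by simp
  moreover have "cinner (\<i> *s x0) x0 = - \<i> * cinner x0 x0"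
    unfolding cinner_def by (simp add: sum_distrib_left mult.assoc)
  ultimately have "w \<bullet> Gvec x0 = 0"
    by (simp add: w_def inner_Gvec)
  moreover have "norm w \<noteq> 0"
    using assms by (simp add: w_def norm_Gvec norm_vector_smult)
  ultimately show ?thesis
    by (intro exI[of _ "inverse (norm w) *\<^sub>R w"]) simp
qed

lemma norm_cadj_mult:
  assumes "B ** cadj B = mat 1"
  shows "norm (cadj B *v u) = norm u"
proof -
  have "cinner (cadj B *v u) (cadj B *v u) = cinner u u"
    by (simp flip: cinner_matrix_vector_cadj add: matrix_vector_mul_assoc assms)
  then have "(norm (cadj B *v u))\<^sup>2 = (norm u)\<^sup>2"
    by (simp flip: Re_cinner_self)
  then show ?thesis by simp
qed

lemma Bmat_coisometry:
  assumes "A ** cadj A = mat 1"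
  shows "Bmat A x0 ** cadj (Bmat A x0) = mat 1"
proof -
  have unimodular: "phase y $ j * cnj (phase y $ j) = 1" for y :: "complex^'m" and j
  proof -
    have "cmod (phase y $ j) = 1" by (simp add: phase_def norm_divide)
    then show ?thesis by (metis complex_norm_square of_real_1 one_power2)
  qed
  have "Bmat A x0 ** cadj (Bmat A x0) = A ** cadj A"
    unfolding Bmat_def cadj_def matrix_matrix_mult_def vec_eq_iff
    by (simp add: mult.assoc mult.left_commute[of "phase _ $ _"] unimodular)
  with assms show ?thesis by simp
qed

text \<open>The phase factors are chosen exactly so that \<open>B\<^sup>* x\<^sub>0 = |A\<^sup>* x\<^sub>0|\<close>.\<close>

lemma Im_cadj_Bmat_mult: "Im ((cadj (Bmat A x0) *v x0) $ j) = 0"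
proof -
  let ?y = "cadj A *v x0"
  have "(cadj (Bmat A x0) *v x0) $ j = cnj (phase ?y $ j) * ?y $ j"
    unfolding Bmat_def cadj_def matrix_vector_mult_def
    by (simp add: sum_distrib_right mult_ac)
  also have "\<dots> = of_real (cmod (?y $ j))"
    by (cases "?y $ j = 0")
      (simp_all add: phase_def mult.commute[of "cnj _"] complex_norm_square[symmetric] power2_eq_square)
  finally show ?thesis by simp
qed

lemma norm_transpose_realify_Bmat_le_lambda2:
  fixes A :: "complex^'m^'n"
  assumes "A ** cadj A = mat 1"
    and "\<xi> \<bullet> Gvec x0 = 0" and "norm \<xi> = 1"
  shows "norm (transpose (realify (Bmat A x0)) *v \<xi>) \<le> lambda2 (Bmat A x0) x0"
proof -
  let ?B = "Bmat A x0"
  let ?S = "{norm ((\<chi> j. Im ((cadj ?B *v u) $ j)) :: real^'m) | u.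
       Re (cinner (\<i> *s u) x0) = 0 \<and> norm u = 1}"
  obtain u where u: "\<xi> = Gvec u" using Gvec_surj by blast
  text \<open>\<open>Re z = Im (\<i> z)\<close>: the admissible vector in the definition of \<open>\<lambda>\<^sub>2\<close> is \<open>\<i> u\<close>.\<close>
  have T: "transpose (realify ?B) *v \<xi> = (\<chi> j. Im ((cadj ?B *v (\<i> *s u)) $ j))"
    unfolding u transpose_realify_mult_Gvec
    by (simp add: vec_eq_iff matrix_vector_mult_def sum_distrib_left mult.left_commute[of \<i>])
  moreover have "Re (cinner (\<i> *s (\<i> *s u)) x0) = 0"
    using assms(2) u by (simp add: inner_Gvec cinner_def sum_negf Re_sum[symmetric])
  moreover have "norm (\<i> *s u) = 1"
    using assms(3) u by (simp add: norm_Gvec norm_vector_smult)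
  ultimately have "norm (transpose (realify ?B) *v \<xi>) \<in> ?S"
    unfolding T by blast
  moreover have "bdd_above ?S"
  proof (rule bdd_aboveI)
    fix x assume "x \<in> ?S"
    then obtain w where x: "x = norm ((\<chi> j. Im ((cadj ?B *v w) $ j)) :: real^'m)"
      and "norm w = 1" by blast
    have "x \<le> norm (cadj ?B *v w)"
      unfolding x by (rule norm_le_componentwise_cart) (simp add: abs_Im_le_cmod)
    also have "\<dots> = 1"
      using norm_cadj_mult[OF Bmat_coisometry[OF assms(1)]] \<open>norm w = 1\<close> by simp
    finally show "x \<le> 1" .
  qed
  ultimately show ?thesis
    unfolding lambda2_def by (rule cSup_upper)
qed

lemma transpose_realify_Bmat_orth:
  assumes "A ** cadj A = mat 1" and "\<xi> \<bullet> Gvec x0 = 0"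
  shows "(transpose (realify (Bmat A x0)) *v Gvec x0) \<bullet> (transpose (realify (Bmat A x0)) *v \<xi>) = 0"
proof -
  let ?B = "Bmat A x0"
  obtain u where u: "\<xi> = Gvec u" using Gvec_surj by blast
  let ?c = "cadj ?B *v x0" and ?d = "cadj ?B *v u"
  have "(transpose (realify ?B) *v Gvec x0) \<bullet> (transpose (realify ?B) *v \<xi>)
      = (\<Sum>j\<in>UNIV. Re (?c $ j) * Re (?d $ j))"
    unfolding u transpose_realify_mult_Gvec inner_vec_def by simp
  also have "\<dots> = Re (cinner ?c ?d)"
    unfolding cinner_def Re_sum by (rule sum.cong) (simp_all add: Im_cadj_Bmat_mult)
  also have "cinner ?c ?d = cinner x0 u"
    by (simp flip: cinner_matrix_vector_cadj
        add: matrix_vector_mul_assoc Bmat_coisometry[OF assms(1)])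
  also have "Re (cinner x0 u) = 0"
    using assms(2) u by (simp add: inner_Gvec[symmetric] inner_commute)
  finally show ?thesis .
qed

lemma realify_Bmat_mult_transpose_on_orth:
  fixes A :: "complex^'m^'n" and x0 :: "complex^'n"
  defines "M \<equiv> realify (Bmat A x0)" and "l \<equiv> lambda2 (Bmat A x0) x0"
  assumes "x0 \<noteq> 0" and "A ** cadj A = mat 1" and "\<xi> \<bullet> Gvec x0 = 0"
  shows "norm (M *v (transpose M *v \<xi>)) \<le> l\<^sup>2 * norm \<xi>"
    and "(M *v (transpose M *v \<xi>)) \<bullet> Gvec x0 = 0"
proof -
  obtain \<xi>0 where "\<xi>0 \<bullet> Gvec x0 = 0" "norm \<xi>0 = 1"
    using orth_Gvec_unit_exists[OF \<open>x0 \<noteq> 0\<close>] by blast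
  then have "l \<ge> 0"
    using norm_transpose_realify_Bmat_le_lambda2[OF \<open>A ** cadj A = mat 1\<close>]
    unfolding l_def by (meson norm_ge_zero order_trans)
  show "norm (M *v (transpose M *v \<xi>)) \<le> l\<^sup>2 * norm \<xi>"
    unfolding M_def l_def
    using norm_transpose_realify_Bmat_le_lambda2[OF \<open>A ** cadj A = mat 1\<close>]
      transpose_realify_Bmat_orth[OF \<open>A ** cadj A = mat 1\<close>] \<open>l \<ge> 0\<close>[unfolded l_def]
      \<open>\<xi> \<bullet> Gvec x0 = 0\<close>
    by (rule norm_mult_transpose_le)
  show "(M *v (transpose M *v \<xi>)) \<bullet> Gvec x0 = 0"
    unfolding M_def
    using transpose_realify_Bmat_orth[OF \<open>A ** cadj A = mat 1\<close>] \<open>\<xi> \<bullet> Gvec x0 = 0\<close>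
    by (rule mult_transpose_orth)
qed

theorem mainTheorem12:
  fixes x0 :: "complex^'n" and A1 A2 :: "complex^'m^'n"
  assumes "x0 \<noteq> 0"
    and "A1 ** cadj A1 = mat 1"
    and "A2 ** cadj A2 = mat 1"
  shows "perp_norm (Dmat A1 A2 x0) (Gvec x0)
           \<le> (lambda2 (Bmat A2 x0) x0 * lambda2 (Bmat A1 x0) x0)\<^sup>2"
proof (rule perp_norm_le[OF orth_Gvec_unit_exists[OF assms(1)]])
  let ?M1 = "realify (Bmat A1 x0)" and ?M2 = "realify (Bmat A2 x0)"
  let ?l1 = "lambda2 (Bmat A1 x0) x0" and ?l2 = "lambda2 (Bmat A2 x0) x0"
  fix \<xi> assume "\<xi> \<bullet> Gvec x0 = 0" and "norm \<xi> = 1"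
  define P where "P = ?M1 *v (transpose ?M1 *v \<xi>)"
  have "norm P \<le> ?l1\<^sup>2" and "P \<bullet> Gvec x0 = 0"
    using realify_Bmat_mult_transpose_on_orth[OF assms(1,2) \<open>\<xi> \<bullet> Gvec x0 = 0\<close>] \<open>norm \<xi> = 1\<close>
    by (simp_all add: P_def)
  have "Dmat A1 A2 x0 *v \<xi> = ?M2 *v (transpose ?M2 *v P)"
    unfolding Dmat_def Let_def P_def by (simp only: matrix_vector_mul_assoc matrix_mul_assoc)
  then have "norm (Dmat A1 A2 x0 *v \<xi>) \<le> ?l2\<^sup>2 * norm P"
    using realify_Bmat_mult_transpose_on_orth(1)[OF assms(1,3) \<open>P \<bullet> Gvec x0 = 0\<close>] by simp
  also have "\<dots> \<le> ?l2\<^sup>2 * ?l1\<^sup>2"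
    using \<open>norm P \<le> ?l1\<^sup>2\<close> by (simp add: mult_left_mono)
  finally show "norm (Dmat A1 A2 x0 *v \<xi>) \<le> (?l2 * ?l1)\<^sup>2"
    by (simp add: power_mult_distrib)
qed

end
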